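(* Let $T>0$. For each $p\ge1$ and $q\ge1$ there exists a constant $C_{p,q,T}>0$ (independent of $N$ and $s$) such that $$\mathbb E\bigl[(\widetilde Z^N(s))^p\bigr]\le C_{p,q,T}\,N^{-q/2}\qquad\text{for all } s\in[0,T],\ N\in\mathbb N.$$
   Context: Model. Fix $\tau>0$, $\mu\ge 0$, $N\in\mathbb N$, and write $L=\lfloor \tau N\rfloor$. The state space is $\Omega_N=[0,\infty)^{L+1}$, with elements $x=(x_{-L},\dots,x_0)$. Define $\theta_N^\pm:\Omega_N\to\Omega_N$ by $(\theta_N^\pm x)_j=x_{j+1}$ for $-L\le j<0$, $(\theta_N^+x)_0=x_0(1+\frac1N)$, $(\theta_N^-x)_0=\max\{x_0(1-\frac{x_{-L}}{N^2}),0\}$. Let $\xi^N=(\xi^N(n))_{n\ge0}$ be the discrete-time Markov chain on $\Omega_N$ moving from $x$ to $\theta_N^+x$ or $\theta_N^-x$ with probability $1/2$ each, with $\xi^N_j(0)=\mu N$ for all $j$. Let $(\sigma_n)_{n\ge1}$ be i.i.d. Exp(1), independent of $\xi^N$, $J_0=0$, $J_n=\sigma_1+\dots+\sigma_n$, and $X^N(t)=\xi^N(n)$ for $t\in[J_n,J_{n+1})$. Define $Z^N(t)=X^N_{-L}(Nt)/N$ for $t\ge0$ and $\widetilde Z^N(t)=Z^N(t)-\min\{Z^N(t),N\}$. *)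

theory Defs
  imports "HOL-Probability.Probability"
begin

text \<open>Window length L = floor(tau N).  States x = (x_{-L},...,x_0) are encoded as
  functions int => real, meaningful on the indices -L..0 (set to 0 elsewhere).\<close>

definition Lw :: "real \<Rightarrow> nat \<Rightarrow> nat" where
  "Lw \<tau> N = nat \<lfloor>\<tau> * real N\<rfloor>"

definition theta_plus :: "real \<Rightarrow> nat \<Rightarrow> (int \<Rightarrow> real) \<Rightarrow> (int \<Rightarrow> real)" where
  "theta_plus \<tau> N x = (\<lambda>j. if - int (Lw \<tau> N) \<le> j \<and> j < 0 then x (j + 1)
      else if j = 0 then x 0 * (1 + 1 / real N) else 0)"

definition theta_minus :: "real \<Rightarrow> nat \<Rightarrow> (int \<Rightarrow> real) \<Rightarrow> (int \<Rightarrow> real)" where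
  "theta_minus \<tau> N x = (\<lambda>j. if - int (Lw \<tau> N) \<le> j \<and> j < 0 then x (j + 1)
      else if j = 0 then max (x 0 * (1 - x (- int (Lw \<tau> N)) / (real N)^2)) 0 else 0)"

primrec xi :: "real \<Rightarrow> real \<Rightarrow> nat \<Rightarrow> (nat \<Rightarrow> bool) \<Rightarrow> nat \<Rightarrow> (int \<Rightarrow> real)" where
  "xi \<tau> \<mu> N c 0 = (\<lambda>j. if - int (Lw \<tau> N) \<le> j \<and> j \<le> 0 then \<mu> * real N else 0)"
| "xi \<tau> \<mu> N c (Suc n) = (if c n then theta_plus \<tau> N (xi \<tau> \<mu> N c n)
                                else theta_minus \<tau> N (xi \<tau> \<mu> N c n))"

text \<open>Jump times J_n = sigma_1 + ... + sigma_n; here sg i plays the role of sigma_{i+1}.\<close>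
definition Jt :: "(nat \<Rightarrow> real) \<Rightarrow> nat \<Rightarrow> real" where
  "Jt sg n = (\<Sum>i<n. sg i)"

definition Xc :: "real \<Rightarrow> real \<Rightarrow> nat \<Rightarrow> (nat \<Rightarrow> bool) \<Rightarrow> (nat \<Rightarrow> real) \<Rightarrow> real \<Rightarrow> (int \<Rightarrow> real)" where
  "Xc \<tau> \<mu> N c sg t = xi \<tau> \<mu> N c (THE n. Jt sg n \<le> t \<and> t < Jt sg (Suc n))"

definition ZN :: "real \<Rightarrow> real \<Rightarrow> nat \<Rightarrow> (nat \<Rightarrow> bool) \<Rightarrow> (nat \<Rightarrow> real) \<Rightarrow> real \<Rightarrow> real" where
  "ZN \<tau> \<mu> N c sg t = Xc \<tau> \<mu> N c sg (real N * t) (- int (Lw \<tau> N)) / real N"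

definition ZNtilde :: "real \<Rightarrow> real \<Rightarrow> nat \<Rightarrow> (nat \<Rightarrow> bool) \<Rightarrow> (nat \<Rightarrow> real) \<Rightarrow> real \<Rightarrow> real" where
  "ZNtilde \<tau> \<mu> N c sg t = ZN \<tau> \<mu> N c sg t - min (ZN \<tau> \<mu> N c sg t) (real N)"

definition coin_space :: "(nat \<Rightarrow> bool) measure" where
  "coin_space = PiM UNIV (\<lambda>_. measure_pmf (bernoulli_pmf (1/2)))"

definition exp_space :: "(nat \<Rightarrow> real) measure" where
  "exp_space = PiM UNIV (\<lambda>_. density lborel (\<lambda>x. ennreal (exponential_density 1 x)))"

definition model_space :: "((nat \<Rightarrow> bool) \<times> (nat \<Rightarrow> real)) measure" where
  "model_space = coin_space \<Otimes>\<^sub>M exp_space"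

end

theory Submission
  imports Defs
begin

(* Beyond the truncation level N the excess is controlled by a higher moment:
   (Z - min Z N)^p <= Z^(p+r) N^(-r) for every r > 0.  Each jump multiplies the coordinates
   by at most 1 + 1/N, so Z^N(s) <= mu exp(n/N), where n is the number of Exp(1) holding
   times fitting into [0, Ns].  The exponential moment E exp(theta n) is bounded by
   dominating exp(theta n) by the series sum_k exp(theta k + l (t - J_k)): its n-th term alone
   suffices because J_n <= t, and its expectation is a geometric series once 1 + l = exp(2 theta).
   For theta = (p+r)/N this gives E exp(theta n) = O(N) uniformly in s <= T, and r = q/2 + 1
   yields the rate N^(-q/2).  Nothing depends on the window length. *)

lemma exp_minus_one_le: "0 \<le> x \<Longrightarrow> exp x - 1 \<le> x * exp (x::real)"
  using exp_ge_add_one_self[of "- x"] mult_right_mono[of "1 - x" "exp (- x)" "exp x"]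
  by (simp add: algebra_simps exp_minus_inverse)

lemma inverse_one_minus_exp_neg_le:
  fixes x :: real
  assumes x: "0 < x"
  shows "1 / (1 - exp (- x)) \<le> 1 + 1 / x"
proof -
  have "exp (- x) \<le> 1 / (1 + x)"
    using exp_ge_add_one_self[of x] x by (simp add: exp_minus field_simps)
  then have "x / (1 + x) \<le> 1 - exp (- x)"
    using x by (simp add: field_simps)
  then have "1 / (1 - exp (- x)) \<le> 1 / (x / (1 + x))"
    using x by (intro divide_left_mono) auto
  then show ?thesis
    using x by (simp add: field_simps)
qed

lemma truncated_excess_powr_le:
  fixes Z B M p r :: real
  assumes "0 \<le> Z" "Z \<le> B" "0 < M" "0 \<le> p" "0 < r"
  shows "(Z - min Z M) powr p \<le> B powr (p + r) * M powr (- r)"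
proof (cases "Z \<le> M")
  case True
  then show ?thesis
    by simp
next
  case False
  have "(Z - min Z M) powr p \<le> Z powr p"
    using False assms by (intro powr_mono2) auto
  also have "\<dots> \<le> Z powr p * (Z / M) powr r"
  proof -
    have "1 \<le> (Z / M) powr r"
      using False assms by (intro ge_one_powr_ge_zero) auto
    then show ?thesis
      using assms by (simp add: mult_le_cancel_left1)
  qed
  also have "\<dots> = Z powr (p + r) * M powr (- r)"
    using False assms by (simp add: powr_add powr_divide powr_minus divide_inverse powr_mult inverse_powr)
  also have "\<dots> \<le> B powr (p + r) * M powr (- r)"
    using False assms by (intro mult_right_mono powr_mono2) auto
  finally show ?thesis .
qed

lemma nn_integral_exponential_exp_neg:
  fixes \<kappa> l :: real
  assumes \<kappa>: "0 < \<kappa>" and l: "0 \<le> l"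
  shows "(\<integral>\<^sup>+ x. ennreal (exp (- l * x)) \<partial>density lborel (exponential_density \<kappa>))
    = ennreal (\<kappa> / (\<kappa> + l))"
proof -
  have density_shift: "ennreal (exponential_density \<kappa> x) * ennreal (exp (- l * x))
      = ennreal (\<kappa> / (\<kappa> + l)) * ennreal (exponential_density (\<kappa> + l) x)" for x
  proof -
    have "exponential_density \<kappa> x * exp (- l * x) = \<kappa> / (\<kappa> + l) * exponential_density (\<kappa> + l) x"
      using \<kappa> l by (simp add: exponential_density_def field_simps flip: exp_add)
    then show ?thesis
      using \<kappa> l by (simp add: exponential_density_nonneg flip: ennreal_mult')
  qed
  interpret prob_space "density lborel (exponential_density (\<kappa> + l))"
    using \<kappa> l by (intro prob_space_exponential_density) simp
  have "(\<integral>\<^sup>+ x. ennreal (exp (- l * x)) \<partial>density lborel (exponential_density \<kappa>))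
      = (\<integral>\<^sup>+ x. ennreal (\<kappa> / (\<kappa> + l)) * ennreal (exponential_density (\<kappa> + l) x) \<partial>lborel)"
    by (subst nn_integral_density) (use density_shift in auto)
  also have "\<dots> = ennreal (\<kappa> / (\<kappa> + l)) * emeasure (density lborel (exponential_density (\<kappa> + l))) UNIV"
    by (simp add: nn_integral_cmult emeasure_density)
  finally show ?thesis
    using emeasure_space_1 by simp
qed

lemma (in product_prob_space) nn_integral_prod_coordinates:
  assumes J: "finite J" "J \<subseteq> I" and f: "\<And>i. i \<in> J \<Longrightarrow> f i \<in> borel_measurable (M i)"
  shows "(\<integral>\<^sup>+ x. (\<Prod>i\<in>J. f i (x i)) \<partial>PiM I M) = (\<Prod>i\<in>J. integral\<^sup>N (M i) (f i))"
proof -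
  have prod_measurable: "(\<lambda>y. \<Prod>i\<in>J. f i (y i)) \<in> borel_measurable (PiM J M)"
    using f by (intro borel_measurable_prod_ennreal measurable_comp[OF measurable_component_singleton]) auto
  have "(\<integral>\<^sup>+ x. (\<Prod>i\<in>J. f i (x i)) \<partial>PiM I M) = (\<integral>\<^sup>+ x. (\<Prod>i\<in>J. f i (restrict x J i)) \<partial>PiM I M)"
    by (auto intro!: nn_integral_cong prod.cong)
  also have "\<dots> = (\<integral>\<^sup>+ y. (\<Prod>i\<in>J. f i (y i)) \<partial>distr (PiM I M) (PiM J M) (\<lambda>x. restrict x J))"
    using J by (subst nn_integral_distr) (auto intro!: measurable_restrict_subset prod_measurable)
  also have "\<dots> = (\<Prod>i\<in>J. integral\<^sup>N (M i) (f i))"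
    using J f by (simp add: distr_PiM_restrict_finite product_nn_integral_prod)
  finally show ?thesis .
qed

lemma nn_integral_exp_neg_Jt:
  fixes \<kappa> l :: real
  assumes \<kappa>: "0 < \<kappa>" and l: "0 \<le> l"
  shows "(\<integral>\<^sup>+ w. ennreal (exp (- l * Jt w k)) \<partial>(\<Pi>\<^sub>M i\<in>UNIV. density lborel (exponential_density \<kappa>)))
    = ennreal ((\<kappa> / (\<kappa> + l)) ^ k)"
proof -
  interpret product_prob_space "\<lambda>_. density lborel (exponential_density \<kappa>)" UNIV
    unfolding product_prob_space_def product_prob_space_axioms_def product_sigma_finite_def
    using prob_space_exponential_density[OF \<kappa>] by (auto simp: prob_space_imp_sigma_finite)
  have "(\<integral>\<^sup>+ w. ennreal (exp (- l * Jt w k)) \<partial>(\<Pi>\<^sub>M i\<in>UNIV. density lborel (exponential_density \<kappa>)))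
      = (\<integral>\<^sup>+ w. (\<Prod>i<k. ennreal (exp (- l * w i))) \<partial>(\<Pi>\<^sub>M i\<in>UNIV. density lborel (exponential_density \<kappa>)))"
    by (simp add: Jt_def sum_distrib_left exp_sum prod_ennreal)
  also have "\<dots> = (\<Prod>i<k. \<integral>\<^sup>+ x. ennreal (exp (- l * x)) \<partial>density lborel (exponential_density \<kappa>))"
    by (rule nn_integral_prod_coordinates) auto
  also have "\<dots> = ennreal ((\<kappa> / (\<kappa> + l)) ^ k)"
    using nn_integral_exponential_exp_neg[OF \<kappa> l] \<kappa> l by (simp add: ennreal_power)
  finally show ?thesis .
qed

(* THE is unspecified when some holding time is negative; that happens with probability 0. *)
definition jump_count :: "(nat \<Rightarrow> real) \<Rightarrow> real \<Rightarrow> nat" where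
  "jump_count sg t = (THE n. Jt sg n \<le> t \<and> t < Jt sg (Suc n))"

lemma Xc_eq_xi_jump_count: "Xc \<tau> \<mu> N c sg t = xi \<tau> \<mu> N c (jump_count sg t)"
  by (simp add: Xc_def jump_count_def)

lemma mono_Jt:
  assumes "\<And>i. 0 \<le> sg i"
  shows "mono (Jt sg)"
  unfolding Jt_def using assms by (intro monoI sum_mono2) auto

lemma jump_count_eqI:
  assumes sg: "\<And>i. 0 \<le> sg i" and n: "Jt sg n \<le> t" "t < Jt sg (Suc n)"
  shows "jump_count sg t = n"
  unfolding jump_count_def
proof (rule the1_equality)
  have mono: "mono (Jt sg)"
    using sg by (rule mono_Jt)
  have "m = n" if m: "Jt sg m \<le> t" "t < Jt sg (Suc m)" for m
  proof (rule ccontr)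
    assume "m \<noteq> n"
    then have "Suc m \<le> n \<or> Suc n \<le> m"
      by auto
    then show False
      using monoD[OF mono, of "Suc m" n] monoD[OF mono, of "Suc n" m] m n by linarith
  qed
  then show "\<exists>!m. Jt sg m \<le> t \<and> t < Jt sg (Suc m)"
    using n by blast
qed (use n in auto)

definition jump_majorant :: "real \<Rightarrow> real \<Rightarrow> real \<Rightarrow> (nat \<Rightarrow> real) \<Rightarrow> ennreal" where
  "jump_majorant \<theta> l t sg = (\<Sum>k. ennreal (exp (\<theta> * real k + l * (t - Jt sg k))))"

lemma exp_jump_count_le_majorant:
  assumes sg: "\<And>i. 0 \<le> sg i" and t: "0 \<le> t" and "0 \<le> \<theta>" "0 \<le> l"
  shows "ennreal (exp (\<theta> * real (jump_count sg t))) \<le> jump_majorant \<theta> l t sg"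
proof (cases "\<exists>k. t < Jt sg k")
  case True
  then obtain k where "t < Jt sg k" ..
  moreover have "\<not> t < Jt sg 0"
    using t by (simp add: Jt_def)
  ultimately obtain n where n: "Jt sg n \<le> t" "t < Jt sg (Suc n)"
    using ex_least_nat_less[of "\<lambda>k. t < Jt sg k" k] by (auto simp: not_less)
  have "ennreal (exp (\<theta> * real n)) \<le> ennreal (exp (\<theta> * real n + l * (t - Jt sg n)))"
    using n \<open>0 \<le> l\<close> by (intro ennreal_leI) simp
  also have "\<dots> \<le> jump_majorant \<theta> l t sg"
    unfolding jump_majorant_def
    using ennreal_suminf_lessD[of "\<lambda>k. ennreal (exp (\<theta> * real k + l * (t - Jt sg k)))" _ n]
    by (meson not_le order_less_irrefl)
  finally show ?thesis
    using jump_count_eqI[OF sg n] by simp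
next
  case False
  then have ge_1: "1 \<le> exp (\<theta> * real k + l * (t - Jt sg k))" for k
    using assms by (simp add: not_less)
  have "\<not> summable (\<lambda>k. exp (\<theta> * real k + l * (t - Jt sg k)))"
  proof
    assume "summable (\<lambda>k. exp (\<theta> * real k + l * (t - Jt sg k)))"
    then have "summable (\<lambda>_::nat. 1::real)"
      by (rule summable_comparison_test'[of _ 0]) (use ge_1 in auto)
    then show False
      by (simp add: summable_const_iff)
  qed
  then have "jump_majorant \<theta> l t sg = top"
    unfolding jump_majorant_def
    using summable_suminf_not_top[of "\<lambda>k. exp (\<theta> * real k + l * (t - Jt sg k))"] exp_ge_zero by blast
  then show ?thesis
    by simp
qed

lemma prob_space_coin_space: "prob_space coin_space"
  unfolding coin_space_def by (intro prob_space_PiM prob_space_measure_pmf)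

lemma prob_space_exp_space: "prob_space exp_space"
  unfolding exp_space_def by (intro prob_space_PiM prob_space_exponential_density) simp

lemma measurable_exp_space_component [measurable]: "(\<lambda>sg. sg i) \<in> borel_measurable exp_space"
proof -
  have "(\<lambda>sg. sg i) \<in> measurable exp_space (density lborel (exponential_density 1))"
    unfolding exp_space_def by (rule measurable_component_singleton) simp
  also have "measurable exp_space (density lborel (exponential_density 1)) = borel_measurable exp_space"
    by (rule measurable_cong_sets) auto
  finally show ?thesis .
qed

lemma measurable_Jt_exp_space [measurable]: "(\<lambda>sg. Jt sg k) \<in> borel_measurable exp_space"
  unfolding Jt_def by measurable

lemma measurable_jump_majorant [measurable]:
  "(\<lambda>sg. jump_majorant \<theta> l t sg) \<in> borel_measurable exp_space"
  unfolding jump_majorant_def by measurable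

lemma AE_exp_space_nonneg: "AE sg in exp_space. \<forall>i. 0 \<le> sg i"
proof -
  have "AE x in density lborel (exponential_density 1). 0 \<le> x"
    by (subst AE_density) (auto simp: exponential_density_def)
  then show ?thesis
    unfolding exp_space_def
    by (intro AE_all_countable[THEN iffD2] allI AE_PiM_component) (auto intro: prob_space_exponential_density)
qed

lemma nn_integral_jump_majorant:
  fixes \<theta> t :: real
  assumes \<theta>: "0 < \<theta>"
  defines "l \<equiv> exp (2 * \<theta>) - 1"
  shows "(\<integral>\<^sup>+ sg. jump_majorant \<theta> l t sg \<partial>exp_space) = ennreal (exp (l * t) / (1 - exp (- \<theta>)))"
proof -
  have l: "0 \<le> l"
    using \<theta> by (simp add: l_def)
  have summand: "(\<integral>\<^sup>+ sg. ennreal (exp (\<theta> * real k + l * (t - Jt sg k))) \<partial>exp_space)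
      = ennreal (exp (l * t) * exp (- \<theta>) ^ k)" for k
  proof -
    have "(\<integral>\<^sup>+ sg. ennreal (exp (\<theta> * real k + l * (t - Jt sg k))) \<partial>exp_space)
        = (\<integral>\<^sup>+ sg. ennreal (exp (\<theta> * real k + l * t)) * ennreal (exp (- l * Jt sg k)) \<partial>exp_space)"
      by (intro nn_integral_cong) (simp add: algebra_simps flip: ennreal_mult' exp_add)
    also have "\<dots> = ennreal (exp (\<theta> * real k + l * t)) * (\<integral>\<^sup>+ sg. ennreal (exp (- l * Jt sg k)) \<partial>exp_space)"
      by (rule nn_integral_cmult) measurable
    also have "\<dots> = ennreal (exp (\<theta> * real k + l * t)) * ennreal ((1 / (1 + l)) ^ k)"
      unfolding exp_space_def using l by (subst nn_integral_exp_neg_Jt) auto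
    also have "\<dots> = ennreal (exp (l * t) * exp (- \<theta>) ^ k)"
    proof -
      have "exp (\<theta> * real k) * (1 / (1 + l)) ^ k = (exp \<theta> / exp (2 * \<theta>)) ^ k"
        by (simp add: l_def power_divide flip: exp_of_nat_mult)
      also have "exp \<theta> / exp (2 * \<theta>) = exp (- \<theta>)"
        by (simp flip: exp_diff)
      finally have "exp (\<theta> * real k + l * t) * (1 / (1 + l)) ^ k = exp (l * t) * exp (- \<theta>) ^ k"
        by (simp add: exp_add mult_ac)
      then show ?thesis
        using l by (subst ennreal_mult[symmetric]) auto
    qed
    finally show ?thesis .
  qed
  have "(\<integral>\<^sup>+ sg. jump_majorant \<theta> l t sg \<partial>exp_space)
      = (\<Sum>k. \<integral>\<^sup>+ sg. ennreal (exp (\<theta> * real k + l * (t - Jt sg k))) \<partial>exp_space)"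
    unfolding jump_majorant_def by (rule nn_integral_suminf) measurable
  also have "\<dots> = ennreal (\<Sum>k. exp (l * t) * exp (- \<theta>) ^ k)"
    unfolding summand using \<theta> by (intro suminf_ennreal2) (auto intro!: summable_mult summable_geometric)
  also have "(\<Sum>k. exp (l * t) * exp (- \<theta>) ^ k) = exp (l * t) / (1 - exp (- \<theta>))"
    using \<theta> by (subst suminf_mult) (auto simp: suminf_geometric divide_inverse)
  finally show ?thesis .
qed

lemma nn_integral_model_space_le:
  assumes le: "\<And>c sg. (\<And>i. 0 \<le> sg i) \<Longrightarrow> f c sg \<le> g sg"
    and g [measurable]: "g \<in> borel_measurable exp_space"
  shows "(\<integral>\<^sup>+ \<omega>. f (fst \<omega>) (snd \<omega>) \<partial>model_space) \<le> (\<integral>\<^sup>+ sg. g sg \<partial>exp_space)"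
proof -
  interpret coin: prob_space coin_space
    by (rule prob_space_coin_space)
  interpret exp: prob_space exp_space
    by (rule prob_space_exp_space)
  interpret pair_prob_space coin_space exp_space ..
  have "AE \<omega> in model_space. \<forall>i. 0 \<le> snd \<omega> i"
    unfolding model_space_def by (rule AE_pair_measure) (auto intro: AE_exp_space_nonneg)
  then have "(\<integral>\<^sup>+ \<omega>. f (fst \<omega>) (snd \<omega>) \<partial>model_space) \<le> (\<integral>\<^sup>+ \<omega>. g (snd \<omega>) \<partial>model_space)"
    by (intro nn_integral_mono_AE) (auto elim!: eventually_mono intro: le)
  also have "\<dots> = (\<integral>\<^sup>+ sg. g sg \<partial>exp_space)"
    unfolding model_space_def by (subst nn_integral_snd[symmetric]) (auto simp: coin.emeasure_space_1)
  finally show ?thesis .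
qed

lemma xi_nonneg_le:
  assumes \<mu>: "0 \<le> \<mu>" and N: "1 \<le> N"
  shows "0 \<le> xi \<tau> \<mu> N c n j \<and> xi \<tau> \<mu> N c n j \<le> \<mu> * real N * (1 + 1 / real N) ^ n"
proof (induction n arbitrary: j)
  case 0
  then show ?case
    using \<mu> by simp
next
  case (Suc n)
  define x where "x = xi \<tau> \<mu> N c n"
  define B where "B = \<mu> * real N * (1 + 1 / real N) ^ n"
  have x: "0 \<le> x i" "x i \<le> B" for i
    using Suc.IH unfolding x_def B_def by auto
  have B_nonneg: "0 \<le> B"
    using x(1)[of 0] x(2)[of 0] by linarith
  then have B_le: "B \<le> B * (1 + 1 / real N)"
    by (simp add: algebra_simps)
  have B_Suc: "\<mu> * real N * (1 + 1 / real N) ^ Suc n = B * (1 + 1 / real N)"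
    unfolding B_def by simp
  have shrink: "x 0 * (1 - x (- int (Lw \<tau> N)) / (real N)\<^sup>2) \<le> x 0"
    using x[of 0] x[of "- int (Lw \<tau> N)"] by (simp add: mult_left_le)
  show ?case
    unfolding B_Suc using x[of 0] x[of "j + 1"] B_nonneg B_le shrink
    by (cases "c n") (auto simp: theta_plus_def theta_minus_def x_def[symmetric] intro: mult_right_mono)
qed

lemma ZN_nonneg_le:
  assumes \<mu>: "0 \<le> \<mu>" and N: "1 \<le> N"
  shows "0 \<le> ZN \<tau> \<mu> N c sg s
    \<and> ZN \<tau> \<mu> N c sg s \<le> \<mu> * exp (real (jump_count sg (real N * s)) / real N)"
proof -
  define n where "n = jump_count sg (real N * s)"
  have ZN_eq: "ZN \<tau> \<mu> N c sg s = xi \<tau> \<mu> N c n (- int (Lw \<tau> N)) / real N"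
    by (simp add: ZN_def Xc_eq_xi_jump_count n_def)
  have "(1 + 1 / real N) ^ n \<le> exp (1 / real N) ^ n"
    by (intro power_mono) auto
  also have "\<dots> = exp (real n / real N)"
    by (simp flip: exp_of_nat_mult)
  finally have growth: "\<mu> * (1 + 1 / real N) ^ n \<le> \<mu> * exp (real n / real N)"
    using \<mu> by (rule mult_left_mono)
  have xi_nonneg: "0 \<le> xi \<tau> \<mu> N c n (- int (Lw \<tau> N))"
    using xi_nonneg_le[OF \<mu> N] by blast
  have "xi \<tau> \<mu> N c n (- int (Lw \<tau> N)) \<le> \<mu> * (1 + 1 / real N) ^ n * real N"
    using xi_nonneg_le[OF \<mu> N, of \<tau> c n "- int (Lw \<tau> N)"] by (simp add: mult_ac)
  also have "\<dots> \<le> \<mu> * exp (real n / real N) * real N"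
    using growth by (rule mult_right_mono) simp
  finally show ?thesis
    using xi_nonneg N by (simp add: ZN_eq n_def pos_divide_le_eq)
qed

lemma ZNtilde_powr_le:
  assumes \<mu>: "0 \<le> \<mu>" and N: "1 \<le> N" and p: "0 \<le> p" and r: "0 < r"
  shows "ZNtilde \<tau> \<mu> N c sg s powr p
    \<le> \<mu> powr (p + r) * real N powr (- r) * exp ((p + r) / real N * real (jump_count sg (real N * s)))"
proof -
  define n where "n = jump_count sg (real N * s)"
  have "ZNtilde \<tau> \<mu> N c sg s powr p \<le> (\<mu> * exp (real n / real N)) powr (p + r) * real N powr (- r)"
    unfolding ZNtilde_def n_def using ZN_nonneg_le[OF \<mu> N] N p r
    by (intro truncated_excess_powr_le) auto
  also have "(\<mu> * exp (real n / real N)) powr (p + r) = \<mu> powr (p + r) * exp ((p + r) / real N * real n)"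
    using \<mu> by (simp add: powr_mult exp_powr_real)
  finally show ?thesis
    by (simp add: n_def mult_ac)
qed

lemma jump_majorant_mean_le:
  fixes a s T :: real and N :: nat
  assumes a: "0 < a" and N: "1 \<le> N" and s: "0 \<le> s" "s \<le> T"
  defines "\<theta> \<equiv> a / real N"
  shows "exp ((exp (2 * \<theta>) - 1) * (real N * s)) / (1 - exp (- \<theta>))
    \<le> exp (2 * a * exp (2 * a) * T) * ((1 + 1 / a) * real N)"
proof -
  have \<theta>: "0 < \<theta>" "\<theta> \<le> a"
    using a N by (auto simp: \<theta>_def field_simps)
  have "(exp (2 * \<theta>) - 1) * (real N * s) \<le> 2 * \<theta> * exp (2 * \<theta>) * (real N * s)"
    using \<theta> N s by (intro mult_right_mono exp_minus_one_le) auto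
  also have "\<dots> = 2 * a * exp (2 * \<theta>) * s"
    using N by (simp add: \<theta>_def)
  also have "\<dots> \<le> 2 * a * exp (2 * a) * T"
    using a s \<theta> by (intro mult_mono) auto
  finally have growth: "exp ((exp (2 * \<theta>) - 1) * (real N * s)) \<le> exp (2 * a * exp (2 * a) * T)"
    by simp
  have "1 / (1 - exp (- \<theta>)) \<le> 1 + real N / a"
    using inverse_one_minus_exp_neg_le[OF \<theta>(1)] by (simp add: \<theta>_def)
  also have "\<dots> \<le> (1 + 1 / a) * real N"
    using N a by (simp add: field_simps)
  finally have "1 / (1 - exp (- \<theta>)) \<le> (1 + 1 / a) * real N" .
  with growth \<theta> show ?thesis
    by (simp add: divide_inverse mult_mono)
qed

lemma nn_integral_jump_majorant_le:
  fixes a s T :: real and N :: nat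
  assumes a: "0 < a" and N: "1 \<le> N" and s: "0 \<le> s" "s \<le> T"
  defines "\<theta> \<equiv> a / real N"
  shows "(\<integral>\<^sup>+ sg. jump_majorant \<theta> (exp (2 * \<theta>) - 1) (real N * s) sg \<partial>exp_space)
    \<le> ennreal (exp (2 * a * exp (2 * a) * T) * ((1 + 1 / a) * real N))"
proof -
  have "0 < \<theta>"
    using a N by (simp add: \<theta>_def)
  then have "(\<integral>\<^sup>+ sg. jump_majorant \<theta> (exp (2 * \<theta>) - 1) (real N * s) sg \<partial>exp_space)
      = ennreal (exp ((exp (2 * \<theta>) - 1) * (real N * s)) / (1 - exp (- \<theta>)))"
    by (rule nn_integral_jump_majorant)
  also have "\<dots> \<le> ennreal (exp (2 * a * exp (2 * a) * T) * ((1 + 1 / a) * real N))"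
    using jump_majorant_mean_le[OF a N s] unfolding \<theta>_def by (rule ennreal_leI)
  finally show ?thesis .
qed

lemma nn_integral_ZNtilde_powr_le:
  assumes \<mu>: "0 \<le> \<mu>" and N: "1 \<le> N" and p: "0 \<le> p" and r: "0 < r" and s: "0 \<le> s" "s \<le> T"
  defines "a \<equiv> p + r"
  shows "(\<integral>\<^sup>+ \<omega>. ennreal (ZNtilde \<tau> \<mu> N (fst \<omega>) (snd \<omega>) s powr p) \<partial>model_space)
    \<le> ennreal (\<mu> powr a * exp (2 * a * exp (2 * a) * T) * (1 + 1 / a) * real N powr (1 - r))"
proof -
  define \<theta> where "\<theta> = a / real N"
  define l where "l = exp (2 * \<theta>) - 1"
  define K where "K = \<mu> powr a * real N powr (- r)"
  have a: "0 < a"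
    using p r by (simp add: a_def)
  have "(\<integral>\<^sup>+ \<omega>. ennreal (ZNtilde \<tau> \<mu> N (fst \<omega>) (snd \<omega>) s powr p) \<partial>model_space)
      \<le> (\<integral>\<^sup>+ sg. ennreal K * jump_majorant \<theta> l (real N * s) sg \<partial>exp_space)"
  proof (rule nn_integral_model_space_le)
    fix c and sg :: "nat \<Rightarrow> real"
    assume sg: "\<And>i. 0 \<le> sg i"
    have "ennreal (ZNtilde \<tau> \<mu> N c sg s powr p)
        \<le> ennreal K * ennreal (exp (\<theta> * real (jump_count sg (real N * s))))"
      using ZNtilde_powr_le[OF \<mu> N p r, of \<tau> c sg s]
      by (simp add: K_def \<theta>_def a_def ennreal_leI flip: ennreal_mult)
    also have "\<dots> \<le> ennreal K * jump_majorant \<theta> l (real N * s) sg"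
      using sg s N a by (intro mult_left_mono exp_jump_count_le_majorant) (auto simp: l_def \<theta>_def)
    finally show "ennreal (ZNtilde \<tau> \<mu> N c sg s powr p) \<le> ennreal K * jump_majorant \<theta> l (real N * s) sg" .
  qed measurable
  also have "\<dots> = ennreal K * (\<integral>\<^sup>+ sg. jump_majorant \<theta> l (real N * s) sg \<partial>exp_space)"
    by (rule nn_integral_cmult) measurable
  also have "\<dots> \<le> ennreal K * ennreal (exp (2 * a * exp (2 * a) * T) * ((1 + 1 / a) * real N))"
    unfolding l_def \<theta>_def using a N s by (intro mult_left_mono nn_integral_jump_majorant_le) auto
  also have "\<dots> = ennreal (\<mu> powr a * exp (2 * a * exp (2 * a) * T) * (1 + 1 / a) * (real N powr (- r) * real N))"
    by (subst ennreal_mult'[symmetric]) (auto simp: K_def mult_ac)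
  also have "real N powr (- r) * real N = real N powr (1 - r)"
    using N by (simp add: powr_diff powr_minus divide_inverse)
  finally show ?thesis .
qed

theorem lemma3p3:
  fixes \<tau> \<mu> T :: real
  assumes "\<tau> > 0" and "\<mu> \<ge> 0" and "T > 0"
  shows "\<forall>p::real \<ge> 1. \<forall>q::real \<ge> 1. \<exists>C::real > 0. \<forall>N::nat. \<forall>s \<in> {0..T}. N \<ge> 1 \<longrightarrow>
           (\<integral>\<^sup>+ \<omega>. ennreal ((ZNtilde \<tau> \<mu> N (fst \<omega>) (snd \<omega>) s) powr p) \<partial>model_space)
             \<le> ennreal (C * real N powr (- q / 2))"
proof (intro allI impI)
  fix p q :: real
  assume p: "1 \<le> p" and q: "1 \<le> q"
  define a where "a = p + (q / 2 + 1)"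
  define C where "C = \<mu> powr a * exp (2 * a * exp (2 * a) * T) * (1 + 1 / a) + 1"
  have "(\<integral>\<^sup>+ \<omega>. ennreal ((ZNtilde \<tau> \<mu> N (fst \<omega>) (snd \<omega>) s) powr p) \<partial>model_space)
      \<le> ennreal (C * real N powr (- q / 2))" if N: "1 \<le> N" and s: "s \<in> {0..T}" for N :: nat and s
  proof -
    have "(\<integral>\<^sup>+ \<omega>. ennreal ((ZNtilde \<tau> \<mu> N (fst \<omega>) (snd \<omega>) s) powr p) \<partial>model_space)
        \<le> ennreal ((C - 1) * real N powr (- q / 2))"
      using nn_integral_ZNtilde_powr_le[OF \<open>\<mu> \<ge> 0\<close> N, of p "q / 2 + 1" s T \<tau>] p q s
      by (simp add: C_def a_def)
    also have "\<dots> \<le> ennreal (C * real N powr (- q / 2))"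
      by (intro ennreal_leI mult_right_mono) auto
    finally show ?thesis .
  qed
  moreover have "0 < C"
    using p q by (auto simp: C_def a_def intro!: add_nonneg_pos)
  ultimately show "\<exists>C>0. \<forall>N::nat. \<forall>s\<in>{0..T}. N \<ge> 1 \<longrightarrow>
      (\<integral>\<^sup>+ \<omega>. ennreal ((ZNtilde \<tau> \<mu> N (fst \<omega>) (snd \<omega>) s) powr p) \<partial>model_space)
        \<le> ennreal (C * real N powr (- q / 2))"
    by blast
qed

end
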